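(* Consider a uniprocessor preemptive system scheduled by EDF (earliest absolute deadline first), containing an observer task $\tau_o$ and a victim task $\tau_v$ with integer periods $T_o$ and $T_v$, $T_o \neq T_v$, and implicit deadlines (each job arriving at time $a$ has absolute deadline $a$ plus its task's period). If some arrival of $\tau_v$ is observable by $\tau_o$, then $T_o > T_v$. (Equivalently: if $T_o < T_v$, no arrival of $\tau_v$ is observable by $\tau_o$.)
   Context: Time is discrete (integer ticks). A task $\tau_i$ has period $T_i$ (jobs arrive at times $a_i^{k+1}=a_i^k+T_i$) and relative deadline $D_i=T_i$, so the $k$-th job arriving at $a_i^k$ has absolute deadline $d_i^k=a_i^k+T_i$. Under EDF, among ready jobs the one with the smallest absolute deadline has the highest priority (ties broken arbitrarily). Observability: an arrival of $\tau_v$ at time $a_v$ (with deadline $d_v=a_v+T_v$) is observable by $\tau_o$ if $\tau_o$ has lower priority than $\tau_v$ at $a_v$, i.e. there is a job of $\tau_o$ with arrival $a_o \le a_v$ (the job of $\tau_o$ whose period contains $a_v$, $a_o\le a_v<a_o+T_o$) whose absolute deadline satisfies $d_o = a_o+T_o > d_v = a_v + T_v$. *)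

theory Defs
  imports Main
begin

definition periodic_arrivals :: "(nat \<Rightarrow> int) \<Rightarrow> int \<Rightarrow> bool" where
  "periodic_arrivals a T \<longleftrightarrow> (\<forall>k. a (Suc k) = a k + T)"

definition abs_deadline :: "int \<Rightarrow> int \<Rightarrow> int" where
  "abs_deadline arr T = arr + T"

definition observable :: "(nat \<Rightarrow> int) \<Rightarrow> int \<Rightarrow> int \<Rightarrow> int \<Rightarrow> bool" where
  "observable a_o T_o a_v T_v \<longleftrightarrow>
     (\<exists>k. a_o k \<le> a_v \<and> a_v < a_o k + T_o \<and>
          abs_deadline (a_o k) T_o > abs_deadline a_v T_v)"

end

theory Submission
  imports Defs
begin

lemma observable_imp_period_less:
  assumes "observable a_o T_o a_v T_v"
  shows "T_v < T_o"
proof -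
  from assms obtain k where "a_o k \<le> a_v" and "a_v + T_v < a_o k + T_o"
    unfolding observable_def abs_deadline_def by blast
  then show ?thesis by linarith
qed

text \<open>Only observability is needed: the observer job arrives no later than the victim job
  yet has the later deadline, so its relative deadline is the longer one.\<close>

theorem theorem1:
  fixes a_o a_v :: "nat \<Rightarrow> int" and T_o T_v :: int
  assumes "T_o > 0" and "T_v > 0" and "T_o \<noteq> T_v"
    and "periodic_arrivals a_o T_o" and "periodic_arrivals a_v T_v"
    and "\<exists>k. observable a_o T_o (a_v k) T_v"
  shows "T_o > T_v"
  using assms(6) observable_imp_period_less by blast

end
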